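(* Let $(X,\mathcal{A},\mu)$ be a probability space, $\theta$ a measure-preserving endomorphism of it, $\varphi$ a ceiling function, and $(\overline{X},\overline{\mu},(\Phi_t)_{t\ge 0})$ the special flow with base transformation $\theta$ and ceiling function $\varphi$. Let $\overline{A},\overline{B}\subset\overline{X}$ be holes. Then (each relation being asserted whenever the escape rates appearing in it exist): (1) If $\overline{A}\subset\overline{B}$, then $\rho(\overline{A},\varphi)\le\rho(\overline{B},\varphi)$. (2) For all $r\ge 0$, $\rho(\overline{A},\varphi)=\rho(\Phi_r^{-1}(\overline{A}),\varphi)$. (3) For all $r\ge 0$, $\rho(\overline{A},\varphi)=\rho\big(\bigcup_{\tau\in[0,r]}\Phi_\tau^{-1}(\overline{A}),\varphi\big)$. (4) If $\varphi$ is bounded and $\pi_1(\overline{A})$ is measurable, then $\rho(\pi_1^{-1}(\pi_1(\overline{A})),\varphi)=\rho(\overline{A},\varphi)$.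
   Context: A ceiling function is a measurable $\varphi:X\to\mathbb{R}$ with $\inf_{x\in X}\varphi(x)>0$. Write $S_n\varphi=\sum_{k=0}^{n-1}\varphi\circ\theta^k$ and $N_t^\varphi(x)=\min\{n\in\mathbb{N}_0: S_n\varphi(x)>t\}$ for $t\ge0$. The special flow: $\overline{X}=\{(x,s)\in X\times\mathbb{R}:0\le s<\varphi(x)\}$ with the restriction $\overline{\mu}$ of the product of $\mu$ with Lebesgue measure, and $\Phi_t(x,s)=(x,s+t)$ if $0\le t<\varphi(x)-s$, and $\Phi_t(x,s)=(\theta^{N-1}x,\,s+t-S_{N-1}\varphi(x))$ with $N=N^\varphi_{s+t}(x)$ if $t\ge\varphi(x)-s$. $\pi_1:\overline{X}\to X$ is the projection to the first coordinate. A hole is a measurable $\overline{A}\subset\overline{X}$ with $\bigcup_{t\ge0}\Phi_t^{-1}(\overline{A})=\overline{X}$ up to a $\overline{\mu}$-null set and such that $\bigcup_{t\in[0,\tau]}\Phi_t^{-1}(\overline{A})$ is measurable for every $\tau\ge0$. The upper/lower escape rates are $\limsup_{t\to\infty}$ resp. $\liminf_{t\to\infty}$ of $-\frac1t\log\overline{\mu}(\{(x,s)\in\overline{X}:\forall\tau\in[0,t]:\Phi_\tau(x,s)\notin\overline{A}\})$; if they coincide, the common value is the escape rate $\rho(\overline{A},\varphi)$. *)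

theory Defs
  imports "HOL-Probability.Probability"
begin

definition mp_endo :: "'a measure \<Rightarrow> ('a \<Rightarrow> 'a) \<Rightarrow> bool" where
  "mp_endo M \<theta> \<longleftrightarrow> \<theta> \<in> measurable M M \<and> distr M M \<theta> = M"

definition ceiling_fun :: "'a measure \<Rightarrow> ('a \<Rightarrow> real) \<Rightarrow> bool" where
  "ceiling_fun M \<phi> \<longleftrightarrow> \<phi> \<in> borel_measurable M \<and> (\<exists>c>0. \<forall>x\<in>space M. c \<le> \<phi> x)"

definition bsum :: "('a \<Rightarrow> 'a) \<Rightarrow> ('a \<Rightarrow> real) \<Rightarrow> nat \<Rightarrow> 'a \<Rightarrow> real" where
  "bsum \<theta> \<phi> n x = (\<Sum>k<n. \<phi> ((\<theta> ^^ k) x))"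

definition Nt :: "('a \<Rightarrow> 'a) \<Rightarrow> ('a \<Rightarrow> real) \<Rightarrow> real \<Rightarrow> 'a \<Rightarrow> nat" where
  "Nt \<theta> \<phi> t x = (LEAST n. bsum \<theta> \<phi> n x > t)"

definition sf_space :: "'a measure \<Rightarrow> ('a \<Rightarrow> real) \<Rightarrow> ('a \<times> real) set" where
  "sf_space M \<phi> = {(x, s). x \<in> space M \<and> 0 \<le> s \<and> s < \<phi> x}"

definition sf_measure :: "'a measure \<Rightarrow> ('a \<Rightarrow> real) \<Rightarrow> ('a \<times> real) measure" where
  "sf_measure M \<phi> = restrict_space (M \<Otimes>\<^sub>M lborel) (sf_space M \<phi>)"

definition sf_flow :: "('a \<Rightarrow> 'a) \<Rightarrow> ('a \<Rightarrow> real) \<Rightarrow> real \<Rightarrow> 'a \<times> real \<Rightarrow> 'a \<times> real" where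
  "sf_flow \<theta> \<phi> t p = (case p of (x, s) \<Rightarrow>
     if t < \<phi> x - s then (x, s + t)
     else (let N = Nt \<theta> \<phi> (s + t) x in
           ((\<theta> ^^ (N - 1)) x, s + t - bsum \<theta> \<phi> (N - 1) x)))"

definition sf_preimage :: "'a measure \<Rightarrow> ('a \<Rightarrow> 'a) \<Rightarrow> ('a \<Rightarrow> real) \<Rightarrow> real
    \<Rightarrow> ('a \<times> real) set \<Rightarrow> ('a \<times> real) set" where
  "sf_preimage M \<theta> \<phi> t A = {p \<in> sf_space M \<phi>. sf_flow \<theta> \<phi> t p \<in> A}"

definition sf_hit_before :: "'a measure \<Rightarrow> ('a \<Rightarrow> 'a) \<Rightarrow> ('a \<Rightarrow> real) \<Rightarrow> real
    \<Rightarrow> ('a \<times> real) set \<Rightarrow> ('a \<times> real) set" where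
  "sf_hit_before M \<theta> \<phi> r A = (\<Union>\<tau>\<in>{0..r}. sf_preimage M \<theta> \<phi> \<tau> A)"

definition is_hole :: "'a measure \<Rightarrow> ('a \<Rightarrow> 'a) \<Rightarrow> ('a \<Rightarrow> real) \<Rightarrow> ('a \<times> real) set \<Rightarrow> bool" where
  "is_hole M \<theta> \<phi> A \<longleftrightarrow>
     A \<in> sets (sf_measure M \<phi>) \<and>
     (\<exists>Z \<in> null_sets (sf_measure M \<phi>).
        sf_space M \<phi> - (\<Union>t\<in>{0..}. sf_preimage M \<theta> \<phi> t A) \<subseteq> Z) \<and>
     (\<forall>\<tau>\<ge>0. sf_hit_before M \<theta> \<phi> \<tau> A \<in> sets (sf_measure M \<phi>))"

definition survivors :: "'a measure \<Rightarrow> ('a \<Rightarrow> 'a) \<Rightarrow> ('a \<Rightarrow> real) \<Rightarrow> ('a \<times> real) set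
    \<Rightarrow> real \<Rightarrow> ('a \<times> real) set" where
  "survivors M \<theta> \<phi> A t = {p \<in> sf_space M \<phi>. \<forall>\<tau>\<in>{0..t}. sf_flow \<theta> \<phi> \<tau> p \<notin> A}"

definition eln :: "ennreal \<Rightarrow> ereal" where
  "eln x = (if x = 0 then - \<infinity> else if x = \<top> then \<infinity> else ereal (ln (enn2real x)))"

definition esc_fun :: "'a measure \<Rightarrow> ('a \<Rightarrow> 'a) \<Rightarrow> ('a \<Rightarrow> real) \<Rightarrow> ('a \<times> real) set
    \<Rightarrow> real \<Rightarrow> ereal" where
  "esc_fun M \<theta> \<phi> A t = - eln (emeasure (sf_measure M \<phi>) (survivors M \<theta> \<phi> A t)) / ereal t"

definition upper_esc :: "'a measure \<Rightarrow> ('a \<Rightarrow> 'a) \<Rightarrow> ('a \<Rightarrow> real) \<Rightarrow> ('a \<times> real) set \<Rightarrow> ereal" where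
  "upper_esc M \<theta> \<phi> A = Limsup at_top (esc_fun M \<theta> \<phi> A)"

definition lower_esc :: "'a measure \<Rightarrow> ('a \<Rightarrow> 'a) \<Rightarrow> ('a \<Rightarrow> real) \<Rightarrow> ('a \<times> real) set \<Rightarrow> ereal" where
  "lower_esc M \<theta> \<phi> A = Liminf at_top (esc_fun M \<theta> \<phi> A)"

definition esc_exists :: "'a measure \<Rightarrow> ('a \<Rightarrow> 'a) \<Rightarrow> ('a \<Rightarrow> real) \<Rightarrow> ('a \<times> real) set \<Rightarrow> bool" where
  "esc_exists M \<theta> \<phi> A \<longleftrightarrow> upper_esc M \<theta> \<phi> A = lower_esc M \<theta> \<phi> A"

definition esc_rate :: "'a measure \<Rightarrow> ('a \<Rightarrow> 'a) \<Rightarrow> ('a \<Rightarrow> real) \<Rightarrow> ('a \<times> real) set \<Rightarrow> ereal" where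
  "esc_rate M \<theta> \<phi> A = upper_esc M \<theta> \<phi> A"

end

theory Submission
  imports Defs
begin

text \<open>
  The special flow preserves the measure: for times below the infimum \<open>c\<close> of the ceiling the
  flow makes at most one jump, and on the fibres this is a translation of Lebesgue measure
  combined with the \<open>\<theta>\<close>-invariance of \<open>\<mu>\<close>; longer times are compositions of short ones.
  Hence the survivor set of \<open>\<Phi>\<^sub>r\<^sup>-\<^sup>1(A)\<close> has the same measure as that of \<open>A\<close>.
  For the other two enlargements of a hole the survivor sets are squeezed between those of
  \<open>A\<close> at times \<open>t\<close> and \<open>t + d\<close> for a fixed delay \<open>d\<close> (\<open>d = r\<close>, resp. \<open>d = 2 sup \<phi>\<close>, since
  each fibre is traversed within time \<open>sup \<phi>\<close>), and a fixed delay does not change the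
  exponential rate.
\<close>

lemma eln_mono: "a \<le> b \<Longrightarrow> eln a \<le> eln b"
proof (cases "a = 0 \<or> b = \<top>")
  case False
  assume ab: "a \<le> b"
  then have a: "a \<noteq> 0" "a \<noteq> \<top>" and b: "b \<noteq> 0" "b \<noteq> \<top>"
    using False top.extremum_unique by (auto simp: top_unique)
  have "enn2real a \<le> enn2real b" using ab b by (simp add: enn2real_mono top.not_eq_extremum)
  moreover have "0 < enn2real a"
    using a by (simp add: enn2real_positive_iff zero_less_iff_neq_zero top.not_eq_extremum)
  ultimately show ?thesis using a b by (simp add: eln_def)
qed (auto simp: eln_def)

lemma minus_eln_divide_antimono: "0 < t \<Longrightarrow> a \<le> b \<Longrightarrow> - eln b / ereal t \<le> - eln a / ereal t"
  using eln_mono[of a b] by (intro ereal_divide_right_mono) auto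

lemma tendsto_divide_at_top_shift:
  fixes l :: "real \<Rightarrow> ereal"
  assumes lim: "((\<lambda>t. l t / ereal t) \<longlongrightarrow> L) at_top" and d: "0 \<le> d"
  shows "((\<lambda>t. l (t + d) / ereal t) \<longlongrightarrow> L) at_top"
proof -
  have "filterlim (\<lambda>t::real. t + d) at_top at_top"
    by (rule filterlim_tendsto_add_at_top[OF tendsto_const filterlim_ident, of d, simplified add.commute])
  from filterlim_compose[OF lim this]
  have shifted: "((\<lambda>t. l (t + d) / ereal (t + d)) \<longlongrightarrow> L) at_top"
    by (simp add: o_def)
  have "((\<lambda>t::real. 1 + d / t) \<longlongrightarrow> 1 + 0) at_top"
    by (intro tendsto_add tendsto_const tendsto_divide_0[OF tendsto_const]
        filterlim_at_top_imp_at_infinity filterlim_ident)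
  moreover have "\<forall>\<^sub>F t in at_top. 1 + d / t = (t + d) / (t::real)"
    using eventually_gt_at_top[of 0] by (rule eventually_mono) (simp add: field_simps)
  ultimately have "((\<lambda>t::real. (t + d) / t) \<longlongrightarrow> 1) at_top"
    by (simp add: Lim_transform_eventually)
  then have "((\<lambda>t. ereal ((t + d) / t)) \<longlongrightarrow> ereal 1) at_top" by (simp add: lim_ereal)
  from tendsto_mult_ereal[OF shifted this]
  have "((\<lambda>t. l (t + d) / ereal (t + d) * ereal ((t + d) / t)) \<longlongrightarrow> L) at_top"
    by (simp add: one_ereal_def[symmetric])
  moreover have "\<forall>\<^sub>F t in at_top. l (t + d) / ereal (t + d) * ereal ((t + d) / t) = l (t + d) / ereal t"
    using eventually_gt_at_top[of 0]
  proof (rule eventually_mono)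
    fix t :: real assume t: "0 < t"
    have "ereal (inverse (t + d)) * ereal ((t + d) / t) = ereal (inverse t)"
      using t d by (simp add: field_simps)
    then show "l (t + d) / ereal (t + d) * ereal ((t + d) / t) = l (t + d) / ereal t"
      using t d by (simp add: divide_ereal_def mult.assoc)
  qed
  ultimately show ?thesis by (rule Lim_transform_eventually)
qed

lemma tendsto_minus_eln_divide_sandwich:
  fixes m n :: "real \<Rightarrow> ennreal"
  assumes lim: "((\<lambda>t. - eln (m t) / ereal t) \<longlongrightarrow> L) at_top" and d: "0 \<le> d"
    and bounds: "\<And>t. 0 \<le> t \<Longrightarrow> m (t + d) \<le> n t \<and> n t \<le> m t"
  shows "((\<lambda>t. - eln (n t) / ereal t) \<longlongrightarrow> L) at_top"
proof (rule tendsto_sandwich[OF _ _ lim tendsto_divide_at_top_shift[OF lim d]])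
  show "\<forall>\<^sub>F t in at_top. - eln (m t) / ereal t \<le> - eln (n t) / ereal t"
    using eventually_gt_at_top[of "0::real"]
    by (rule eventually_mono) (rule minus_eln_divide_antimono; simp add: bounds)
  show "\<forall>\<^sub>F t in at_top. - eln (n t) / ereal t \<le> - eln (m (t + d)) / ereal t"
    using eventually_gt_at_top[of "0::real"]
    by (rule eventually_mono) (rule minus_eln_divide_antimono; simp add: bounds)
qed

lemma esc_rate_antimono:
  assumes "\<And>t. 0 < t \<Longrightarrow>
    emeasure (sf_measure M \<phi>) (survivors M \<theta> \<phi> B t) \<le> emeasure (sf_measure M \<phi>) (survivors M \<theta> \<phi> A t)"
  shows "esc_rate M \<theta> \<phi> A \<le> esc_rate M \<theta> \<phi> B"
  unfolding esc_rate_def upper_esc_def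
proof (rule Limsup_mono)
  show "\<forall>\<^sub>F t in at_top. esc_fun M \<theta> \<phi> A t \<le> esc_fun M \<theta> \<phi> B t"
    using eventually_gt_at_top[of "0::real"]
    unfolding esc_fun_def by (rule eventually_mono) (rule minus_eln_divide_antimono; simp add: assms)
qed

lemma esc_rate_eq_delayI:
  assumes ex: "esc_exists M \<theta> \<phi> A" and d: "0 \<le> d"
    and bounds: "\<And>t. 0 \<le> t \<Longrightarrow>
      emeasure (sf_measure M \<phi>) (survivors M \<theta> \<phi> A (t + d)) \<le> emeasure (sf_measure M \<phi>) (survivors M \<theta> \<phi> B t) \<and>
      emeasure (sf_measure M \<phi>) (survivors M \<theta> \<phi> B t) \<le> emeasure (sf_measure M \<phi>) (survivors M \<theta> \<phi> A t)"
  shows "esc_rate M \<theta> \<phi> B = esc_rate M \<theta> \<phi> A"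
proof -
  have "(esc_fun M \<theta> \<phi> A \<longlongrightarrow> esc_rate M \<theta> \<phi> A) at_top"
    using ex unfolding esc_rate_def esc_exists_def upper_esc_def lower_esc_def
    by (intro tendsto_Limsup) auto
  from tendsto_minus_eln_divide_sandwich[OF this[unfolded esc_fun_def] d bounds]
  have "(esc_fun M \<theta> \<phi> B \<longlongrightarrow> esc_rate M \<theta> \<phi> A) at_top"
    unfolding esc_fun_def[abs_def] .
  then show ?thesis unfolding esc_rate_def upper_esc_def
    by (intro lim_imp_Limsup) auto
qed

lemma sets_vimage_plus: "B \<in> sets borel \<Longrightarrow> (\<lambda>s::real. a + s) -` B \<in> sets borel"
  using measurable_sets[of "\<lambda>s::real. a + s" borel borel B] by auto

lemma emeasure_lborel_vimage_plus:
  "B \<in> sets borel \<Longrightarrow> emeasure lborel ((\<lambda>s::real. a + s) -` B) = emeasure lborel B"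
  by (subst (2) lborel_distr_plus[of a, symmetric]) (simp add: emeasure_distr)

locale special_flow =
  fixes M :: "'a measure" and \<theta> :: "'a \<Rightarrow> 'a" and \<phi> :: "'a \<Rightarrow> real" and c :: real
  assumes measurable_\<theta>[measurable]: "\<theta> \<in> measurable M M"
    and borel_measurable_\<phi>[measurable]: "\<phi> \<in> borel_measurable M"
    and c_pos: "0 < c" and \<phi>_ge_c: "\<And>x. x \<in> space M \<Longrightarrow> c \<le> \<phi> x"
    and distr_\<theta>: "distr M M \<theta> = M"
begin

abbreviation "\<Omega> \<equiv> sf_space M \<phi>"
abbreviation "N \<equiv> M \<Otimes>\<^sub>M lborel"

lemma funpow_in_space: "x \<in> space M \<Longrightarrow> (\<theta> ^^ n) x \<in> space M"
  by (induct n) (auto intro: measurable_space[OF measurable_\<theta>])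

lemma bsum_0 [simp]: "bsum \<theta> \<phi> 0 x = 0"
  by (simp add: bsum_def)

lemma bsum_Suc: "bsum \<theta> \<phi> (Suc n) x = bsum \<theta> \<phi> n x + \<phi> ((\<theta> ^^ n) x)"
  by (simp add: bsum_def)

lemma bsum_Suc_0 [simp]: "bsum \<theta> \<phi> (Suc 0) x = \<phi> x"
  by (simp add: bsum_def)

lemma bsum_add: "bsum \<theta> \<phi> (n + m) x = bsum \<theta> \<phi> n x + bsum \<theta> \<phi> m ((\<theta> ^^ n) x)"
  by (induct m) (auto simp: bsum_Suc, metis add.commute comp_apply funpow_add)

lemma borel_measurable_bsum [measurable]: "bsum \<theta> \<phi> n \<in> borel_measurable M"
  unfolding bsum_def by measurable

lemma bsum_strict_mono: "x \<in> space M \<Longrightarrow> m < n \<Longrightarrow> bsum \<theta> \<phi> m x < bsum \<theta> \<phi> n x"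
proof (induct n)
  case (Suc n)
  have "0 < \<phi> ((\<theta> ^^ n) x)" using \<phi>_ge_c[OF funpow_in_space[OF Suc.prems(1), of n]] c_pos by linarith
  then show ?case using Suc by (cases "m = n") (auto simp: bsum_Suc)
qed simp

lemma bsum_mono: "x \<in> space M \<Longrightarrow> m \<le> n \<Longrightarrow> bsum \<theta> \<phi> m x \<le> bsum \<theta> \<phi> n x"
  using bsum_strict_mono[of x m n] by (cases "m = n") auto

lemma bsum_ge_linear: "x \<in> space M \<Longrightarrow> real n * c \<le> bsum \<theta> \<phi> n x"
proof (induct n)
  case (Suc n)
  then show ?case using \<phi>_ge_c[OF funpow_in_space[OF Suc.prems, of n]] by (simp add: bsum_Suc algebra_simps)
qed simp

lemma bsum_lap_exists:
  assumes x: "x \<in> space M" and v: "0 \<le> v"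
  obtains n where "bsum \<theta> \<phi> n x \<le> v" "v < bsum \<theta> \<phi> (Suc n) x"
proof -
  obtain m :: nat where "v / c < real m" using reals_Archimedean2 by blast
  then have "v < bsum \<theta> \<phi> m x" using bsum_ge_linear[OF x, of m] c_pos by (simp add: field_simps)
  then have ex: "\<exists>m. v < bsum \<theta> \<phi> m x" ..
  define k where "k = (LEAST m. v < bsum \<theta> \<phi> m x)"
  have k: "v < bsum \<theta> \<phi> k x" unfolding k_def by (rule LeastI_ex[OF ex])
  then obtain n where n: "k = Suc n" using v by (cases k) auto
  have "\<not> v < bsum \<theta> \<phi> n x" using not_less_Least[of n "\<lambda>m. v < bsum \<theta> \<phi> m x"] n k_def by auto
  then show ?thesis using that k n by (auto simp: not_less)
qed

lemma Nt_eqI: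
  assumes x: "x \<in> space M" and "bsum \<theta> \<phi> n x \<le> v" "v < bsum \<theta> \<phi> (Suc n) x"
  shows "Nt \<theta> \<phi> v x = Suc n"
  unfolding Nt_def
proof (rule Least_equality)
  fix m assume "v < bsum \<theta> \<phi> m x"
  then show "Suc n \<le> m" using bsum_mono[OF x, of m n] assms by (cases "Suc n \<le> m") auto
qed (use assms in auto)

lemma sf_flow_eq:
  assumes x: "x \<in> space M" and s: "0 \<le> s"
    and lap: "bsum \<theta> \<phi> n x \<le> s + t" "s + t < bsum \<theta> \<phi> (Suc n) x"
  shows "sf_flow \<theta> \<phi> t (x, s) = ((\<theta> ^^ n) x, s + t - bsum \<theta> \<phi> n x)"
proof (cases "t < \<phi> x - s")
  case True
  then have "n = 0" using bsum_mono[OF x, of "Suc 0" n] lap by (cases n) auto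
  then show ?thesis using True by (simp add: sf_flow_def)
next
  case False
  then show ?thesis using Nt_eqI[OF x lap] by (simp add: sf_flow_def Let_def)
qed

lemma sf_space_cases:
  assumes "p \<in> \<Omega>"
  obtains x s where "p = (x, s)" "x \<in> space M" "0 \<le> s" "s < \<phi> x"
  using assms by (auto simp: sf_space_def)

lemma sf_flow_0: "p \<in> \<Omega> \<Longrightarrow> sf_flow \<theta> \<phi> 0 p = p"
  by (auto simp: sf_space_def sf_flow_def)

lemma sf_flow_in_space:
  assumes p: "p \<in> \<Omega>" and t: "0 \<le> t"
  shows "sf_flow \<theta> \<phi> t p \<in> \<Omega>"
proof -
  obtain x s where ps: "p = (x, s)" and x: "x \<in> space M" and s: "0 \<le> s" "s < \<phi> x"
    using p by (rule sf_space_cases)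
  obtain n where n: "bsum \<theta> \<phi> n x \<le> s + t" "s + t < bsum \<theta> \<phi> (Suc n) x"
    using bsum_lap_exists[OF x, of "s + t"] s t by auto
  show ?thesis using sf_flow_eq[OF x s(1) n] n funpow_in_space[OF x, of n]
    by (auto simp: ps sf_space_def bsum_Suc)
qed

lemma sf_flow_add:
  assumes p: "p \<in> \<Omega>" and a: "0 \<le> a" and b: "0 \<le> b"
  shows "sf_flow \<theta> \<phi> (a + b) p = sf_flow \<theta> \<phi> b (sf_flow \<theta> \<phi> a p)"
proof -
  obtain x s where ps: "p = (x, s)" and x: "x \<in> space M" and s: "0 \<le> s" "s < \<phi> x"
    using p by (rule sf_space_cases)
  obtain n where n: "bsum \<theta> \<phi> n x \<le> s + a" "s + a < bsum \<theta> \<phi> (Suc n) x"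
    using bsum_lap_exists[OF x, of "s + a"] s a by auto
  define y where "y = (\<theta> ^^ n) x"
  define u where "u = s + a - bsum \<theta> \<phi> n x"
  have y: "y \<in> space M" using funpow_in_space[OF x] y_def by auto
  have u: "0 \<le> u" using n u_def by auto
  obtain m where m: "bsum \<theta> \<phi> m y \<le> u + b" "u + b < bsum \<theta> \<phi> (Suc m) y"
    using bsum_lap_exists[OF y, of "u + b"] u b by auto
  have "bsum \<theta> \<phi> (n + m) x = bsum \<theta> \<phi> n x + bsum \<theta> \<phi> m y"
    and "bsum \<theta> \<phi> (Suc (n + m)) x = bsum \<theta> \<phi> n x + bsum \<theta> \<phi> (Suc m) y"
    using bsum_add[of n m x] bsum_add[of n "Suc m" x] y_def by simp_all
  then have "sf_flow \<theta> \<phi> (a + b) p = ((\<theta> ^^ (n + m)) x, s + (a + b) - bsum \<theta> \<phi> (n + m) x)"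
    unfolding ps using m u_def by (intro sf_flow_eq[OF x s(1)]) auto
  moreover have "sf_flow \<theta> \<phi> a p = (y, u)"
    using sf_flow_eq[OF x s(1) n] by (simp add: ps y_def u_def)
  moreover note sf_flow_eq[OF y u m] \<open>bsum \<theta> \<phi> (n + m) x = _\<close>
  ultimately show ?thesis by (simp add: y_def u_def funpow_add algebra_simps)
qed

lemma vimage_sf_flow_add:
  assumes "0 \<le> a" "0 \<le> b"
  shows "{p \<in> \<Omega>. sf_flow \<theta> \<phi> (a + b) p \<in> E} =
    {p \<in> \<Omega>. sf_flow \<theta> \<phi> a p \<in> {q \<in> \<Omega>. sf_flow \<theta> \<phi> b q \<in> E}}"
  using sf_flow_in_space[OF _ assms(1)] sf_flow_add[OF _ assms] by auto

definition sf_step :: "real \<Rightarrow> 'a \<times> real \<Rightarrow> 'a \<times> real" where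
  "sf_step t p = (if snd p + t < \<phi> (fst p) then (fst p, snd p + t)
                  else (\<theta> (fst p), snd p + t - \<phi> (fst p)))"

lemma measurable_sf_step: "sf_step t \<in> measurable N N"
  unfolding sf_step_def by measurable

lemma sets_sf_space: "\<Omega> \<in> sets N"
proof -
  have "\<Omega> = {p \<in> space N. 0 \<le> snd p \<and> snd p < \<phi> (fst p)}"
    by (auto simp: sf_space_def space_pair_measure)
  also have "\<dots> \<in> sets N" by measurable
  finally show ?thesis .
qed

lemma sf_flow_eq_sf_step:
  assumes p: "p \<in> \<Omega>" and t: "0 \<le> t" "t < c"
  shows "sf_flow \<theta> \<phi> t p = sf_step t p"
proof -
  obtain x s where ps: "p = (x, s)" and x: "x \<in> space M" and s: "0 \<le> s" "s < \<phi> x"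
    using p by (rule sf_space_cases)
  show ?thesis
  proof (cases "s + t < \<phi> x")
    case True
    then show ?thesis using sf_flow_eq[OF x s(1), of 0 t] s t by (simp add: ps sf_step_def)
  next
    case False
    have "c \<le> \<phi> (\<theta> x)" using \<phi>_ge_c measurable_space[OF measurable_\<theta> x] by auto
    then have "s + t < bsum \<theta> \<phi> (Suc (Suc 0)) x" using s t by (simp add: bsum_Suc)
    then show ?thesis using sf_flow_eq[OF x s(1), of 1 t] s t False by (simp add: ps sf_step_def)
  qed
qed

lemma vimage_Pair_sf_step:
  assumes E: "E \<subseteq> \<Omega>" and x: "x \<in> space M" and t: "0 \<le> t" "t < c"
  shows "Pair x -` {p \<in> \<Omega>. sf_step t p \<in> E} =
    (\<lambda>s. t + s) -` (Pair x -` (E \<inter> space M \<times> {t..})) \<union>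
    (\<lambda>s. (t - \<phi> x) + s) -` (Pair (\<theta> x) -` (E \<inter> space M \<times> {..<t}))"
proof -
  have tx: "\<theta> x \<in> space M" using measurable_space[OF measurable_\<theta> x] .
  have "t < \<phi> x" using \<phi>_ge_c[OF x] t by linarith
  moreover have E_bounds: "\<And>y v. (y, v) \<in> E \<Longrightarrow> y \<in> space M \<and> 0 \<le> v \<and> v < \<phi> y"
    using E by (auto simp: sf_space_def)
  ultimately show ?thesis
    using x tx t by (auto simp: sf_step_def sf_space_def algebra_simps dest: E_bounds)
qed

lemma emeasure_sf_step_vimage:
  assumes E: "E \<in> sets N" "E \<subseteq> \<Omega>" and t: "0 \<le> t" "t < c"
  shows "{p \<in> \<Omega>. sf_step t p \<in> E} \<in> sets N"
    and "emeasure N {p \<in> \<Omega>. sf_step t p \<in> E} = emeasure N E"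
proof -
  define F where "F = {p \<in> \<Omega>. sf_step t p \<in> E}"
  have "F = \<Omega> \<inter> (sf_step t -` E \<inter> space N)"
    using sets.sets_into_space[OF sets_sf_space] by (auto simp: F_def)
  then show F: "F \<in> sets N"
    using sets_sf_space measurable_sets[OF measurable_sf_step E(1)] by (auto simp: F_def)
  define E1 where "E1 = E \<inter> space M \<times> {t..}"
  define E2 where "E2 = E \<inter> space M \<times> {..<t}"
  have E1: "E1 \<in> sets N" and E2: "E2 \<in> sets N"
    unfolding E1_def E2_def using E(1) by (intro sets.Int pair_measureI; simp)+
  define h1 where "h1 x = emeasure lborel (Pair x -` E1)" for x
  define h2 where "h2 x = emeasure lborel (Pair x -` E2)" for x
  have [measurable]: "h1 \<in> borel_measurable M" "h2 \<in> borel_measurable M"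
    unfolding h1_def h2_def by (intro lborel.measurable_emeasure_Pair E1 E2)+
  have section_F: "emeasure lborel (Pair x -` F) = h1 x + h2 (\<theta> x)" if x: "x \<in> space M" for x
  proof -
    have "v < \<phi> x" if "(x, v) \<in> E" for v using that E(2) by (auto simp: sf_space_def)
    moreover have "0 \<le> v" if "(\<theta> x, v) \<in> E" for v using that E(2) by (auto simp: sf_space_def)
    ultimately have "(\<lambda>s. t + s) -` (Pair x -` E1) \<inter> (\<lambda>s. (t - \<phi> x) + s) -` (Pair (\<theta> x) -` E2) = {}"
      by (fastforce simp: E1_def E2_def)
    then show ?thesis
      unfolding F_def vimage_Pair_sf_step[OF E(2) x t] h1_def h2_def E1_def[symmetric] E2_def[symmetric]
      using sets_Pair1[OF E1, of x] sets_Pair1[OF E2, of "\<theta> x"]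
      by (simp add: plus_emeasure[symmetric] sets_vimage_plus emeasure_lborel_vimage_plus)
  qed
  have section_E: "h1 x + h2 x = emeasure lborel (Pair x -` E)" for x
  proof -
    have "Pair x -` E = Pair x -` E1 \<union> Pair x -` E2" "Pair x -` E1 \<inter> Pair x -` E2 = {}"
      using E(2) by (auto simp: E1_def E2_def sf_space_def)
    then show ?thesis
      unfolding h1_def h2_def using sets_Pair1[OF E1, of x] sets_Pair1[OF E2, of x]
      by (simp add: plus_emeasure)
  qed
  have "emeasure N F = (\<integral>\<^sup>+x. h1 x + h2 (\<theta> x) \<partial>M)"
    using lborel.emeasure_pair_measure_alt[OF F] by (simp add: section_F cong: nn_integral_cong)
  also have "\<dots> = (\<integral>\<^sup>+x. h1 x \<partial>M) + (\<integral>\<^sup>+x. h2 x \<partial>distr M M \<theta>)"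
    by (simp add: nn_integral_add nn_integral_distr)
  also have "\<dots> = (\<integral>\<^sup>+x. h1 x + h2 x \<partial>M)"
    by (simp add: distr_\<theta> nn_integral_add)
  also have "\<dots> = emeasure N E"
    by (simp add: section_E lborel.emeasure_pair_measure_alt[OF E(1)])
  finally show "emeasure N F = emeasure N E" .
qed

lemma emeasure_sf_flow_vimage_multiple:
  assumes d: "0 \<le> d" "d < c" and E: "E \<in> sets N" "E \<subseteq> \<Omega>"
  shows "{p \<in> \<Omega>. sf_flow \<theta> \<phi> (real k * d) p \<in> E} \<in> sets N \<and>
         emeasure N {p \<in> \<Omega>. sf_flow \<theta> \<phi> (real k * d) p \<in> E} = emeasure N E"
proof (induct k)
  case 0
  have "{p \<in> \<Omega>. sf_flow \<theta> \<phi> (real 0 * d) p \<in> E} = E" using E(2) sf_flow_0 by auto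
  then show ?case using E by simp
next
  case (Suc k)
  define G where "G = {q \<in> \<Omega>. sf_flow \<theta> \<phi> (real k * d) q \<in> E}"
  have "{p \<in> \<Omega>. sf_flow \<theta> \<phi> (real (Suc k) * d) p \<in> E} = {p \<in> \<Omega>. sf_flow \<theta> \<phi> d p \<in> G}"
    unfolding G_def using vimage_sf_flow_add[of d "real k * d" E] d by (simp add: algebra_simps)
  also have "\<dots> = {p \<in> \<Omega>. sf_step d p \<in> G}" using sf_flow_eq_sf_step[OF _ d] by auto
  finally have "{p \<in> \<Omega>. sf_flow \<theta> \<phi> (real (Suc k) * d) p \<in> E} = {p \<in> \<Omega>. sf_step d p \<in> G}" .
  moreover have "G \<in> sets N" "G \<subseteq> \<Omega>" "emeasure N G = emeasure N E" using Suc by (auto simp: G_def)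
  ultimately show ?case using emeasure_sf_step_vimage[of G d] d by simp
qed

lemma emeasure_sf_flow_vimage:
  assumes r: "0 \<le> r" and E: "E \<in> sets N" "E \<subseteq> \<Omega>"
  shows "{p \<in> \<Omega>. sf_flow \<theta> \<phi> r p \<in> E} \<in> sets N \<and>
         emeasure N {p \<in> \<Omega>. sf_flow \<theta> \<phi> r p \<in> E} = emeasure N E"
proof -
  define n :: nat where "n = nat \<lceil>r / c\<rceil> + 1"
  have n: "0 < real n" by (simp add: n_def)
  have "r / c < real n" unfolding n_def by linarith
  then have "r / real n < c" using c_pos n by (simp add: field_simps)
  moreover have "0 \<le> r / real n" using r n by simp
  moreover have "real n * (r / real n) = r" using n by simp
  ultimately show ?thesis using emeasure_sf_flow_vimage_multiple[of "r / real n" E n] E by simp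
qed

lemma sets_sf_measure_iff: "S \<in> sets (sf_measure M \<phi>) \<longleftrightarrow> S \<subseteq> \<Omega> \<and> S \<in> sets N"
  unfolding sf_measure_def
  by (rule sets_restrict_space_iff) (use sets_sf_space sets.sets_into_space in \<open>auto simp: Int_absorb2\<close>)

lemma emeasure_sf_measure: "S \<subseteq> \<Omega> \<Longrightarrow> emeasure (sf_measure M \<phi>) S = emeasure N S"
  unfolding sf_measure_def
  by (rule emeasure_restrict_space) (use sets_sf_space sets.sets_into_space in \<open>auto simp: Int_absorb2\<close>)

lemma survivors_subset: "survivors M \<theta> \<phi> A t \<subseteq> \<Omega>"
  by (auto simp: survivors_def)

lemma sets_survivors:
  assumes "is_hole M \<theta> \<phi> A" "0 \<le> t"
  shows "survivors M \<theta> \<phi> A t \<in> sets N"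
proof -
  have "survivors M \<theta> \<phi> A t = \<Omega> - sf_hit_before M \<theta> \<phi> t A"
    by (auto simp: survivors_def sf_hit_before_def sf_preimage_def)
  moreover have "sf_hit_before M \<theta> \<phi> t A \<in> sets N"
    using assms by (auto simp: is_hole_def sets_sf_measure_iff)
  ultimately show ?thesis using sets_sf_space by auto
qed

lemma emeasure_survivors_antimono:
  assumes A: "is_hole M \<theta> \<phi> A" and AB: "A \<subseteq> B" and t: "0 \<le> t" "t \<le> t'"
  shows "emeasure (sf_measure M \<phi>) (survivors M \<theta> \<phi> B t') \<le> emeasure (sf_measure M \<phi>) (survivors M \<theta> \<phi> A t)"
proof -
  have "survivors M \<theta> \<phi> B t' \<subseteq> survivors M \<theta> \<phi> A t" using AB t by (auto simp: survivors_def)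
  then show ?thesis
    using sets_survivors[OF A t(1)] by (simp add: emeasure_sf_measure survivors_subset emeasure_mono)
qed

lemma survivors_sf_preimage:
  assumes r: "0 \<le> r"
  shows "survivors M \<theta> \<phi> (sf_preimage M \<theta> \<phi> r A) t = {p \<in> \<Omega>. sf_flow \<theta> \<phi> r p \<in> survivors M \<theta> \<phi> A t}"
proof -
  have "sf_flow \<theta> \<phi> r (sf_flow \<theta> \<phi> \<tau> p) = sf_flow \<theta> \<phi> \<tau> (sf_flow \<theta> \<phi> r p)"
    if "p \<in> \<Omega>" "0 \<le> \<tau>" for p \<tau>
    using sf_flow_add[OF that r] sf_flow_add[OF that(1) r that(2)] by (simp add: add.commute)
  then show ?thesis using sf_flow_in_space r by (auto simp: survivors_def sf_preimage_def)
qed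

lemma emeasure_survivors_sf_preimage:
  assumes A: "is_hole M \<theta> \<phi> A" and r: "0 \<le> r" and t: "0 \<le> t"
  shows "emeasure (sf_measure M \<phi>) (survivors M \<theta> \<phi> (sf_preimage M \<theta> \<phi> r A) t) =
    emeasure (sf_measure M \<phi>) (survivors M \<theta> \<phi> A t)"
  using emeasure_sf_flow_vimage[OF r sets_survivors[OF A t] survivors_subset]
  by (simp add: emeasure_sf_measure survivors_subset survivors_sf_preimage[OF r])

lemma survivors_sf_hit_before:
  assumes r: "0 \<le> r" and t: "0 \<le> t"
  shows "survivors M \<theta> \<phi> (sf_hit_before M \<theta> \<phi> r A) t = survivors M \<theta> \<phi> A (t + r)"
proof (intro set_eqI iffI)
  fix p assume p: "p \<in> survivors M \<theta> \<phi> (sf_hit_before M \<theta> \<phi> r A) t"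
  then have pO: "p \<in> \<Omega>" by (auto simp: survivors_def)
  have "sf_flow \<theta> \<phi> \<tau> p \<notin> A" if \<tau>: "0 \<le> \<tau>" "\<tau> \<le> t + r" for \<tau>
  proof -
    define \<tau>1 where "\<tau>1 = min \<tau> t"
    have h: "0 \<le> \<tau>1" "\<tau>1 \<le> t" "0 \<le> \<tau> - \<tau>1" "\<tau> - \<tau>1 \<le> r" using \<tau> t r by (auto simp: \<tau>1_def)
    have "sf_flow \<theta> \<phi> \<tau> p = sf_flow \<theta> \<phi> (\<tau> - \<tau>1) (sf_flow \<theta> \<phi> \<tau>1 p)"
      using sf_flow_add[OF pO h(1) h(3)] by simp
    moreover have "sf_flow \<theta> \<phi> \<tau>1 p \<notin> sf_hit_before M \<theta> \<phi> r A" using p h by (auto simp: survivors_def)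
    ultimately show ?thesis using h sf_flow_in_space[OF pO h(1)]
      by (auto simp: sf_hit_before_def sf_preimage_def)
  qed
  with pO show "p \<in> survivors M \<theta> \<phi> A (t + r)" by (auto simp: survivors_def)
next
  fix p assume p: "p \<in> survivors M \<theta> \<phi> A (t + r)"
  then have pO: "p \<in> \<Omega>" by (auto simp: survivors_def)
  have "sf_flow \<theta> \<phi> \<sigma> (sf_flow \<theta> \<phi> \<tau> p) \<notin> A" if "0 \<le> \<tau>" "\<tau> \<le> t" "0 \<le> \<sigma>" "\<sigma> \<le> r" for \<tau> \<sigma>
    using p that sf_flow_add[OF pO, of \<tau> \<sigma>] by (auto simp: survivors_def dest: bspec[of _ _ "\<tau> + \<sigma>"])
  with pO show "p \<in> survivors M \<theta> \<phi> (sf_hit_before M \<theta> \<phi> r A) t"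
    by (auto simp: survivors_def sf_hit_before_def sf_preimage_def)
qed

abbreviation vertical_saturation :: "('a \<times> real) set \<Rightarrow> ('a \<times> real) set" where
  "vertical_saturation A \<equiv> {p \<in> \<Omega>. fst p \<in> fst ` A}"

lemma survivors_vertical_saturation:
  assumes t: "0 \<le> t"
  shows "survivors M \<theta> \<phi> (vertical_saturation A) t =
    {p \<in> \<Omega>. \<forall>n. bsum \<theta> \<phi> n (fst p) \<le> snd p + t \<longrightarrow> (\<theta> ^^ n) (fst p) \<notin> fst ` A}"
proof (intro set_eqI iffI)
  fix p assume p: "p \<in> survivors M \<theta> \<phi> (vertical_saturation A) t"
  then have pO: "p \<in> \<Omega>" by (auto simp: survivors_def)
  obtain x s where ps: "p = (x, s)" and x: "x \<in> space M" and s: "0 \<le> s" "s < \<phi> x"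
    using pO by (rule sf_space_cases)
  have "(\<theta> ^^ n) x \<notin> fst ` A" if n: "bsum \<theta> \<phi> n x \<le> s + t" for n
  proof
    assume inA: "(\<theta> ^^ n) x \<in> fst ` A"
    define \<tau> where "\<tau> = (if n = 0 then 0 else bsum \<theta> \<phi> n x - s)"
    have "n \<noteq> 0 \<Longrightarrow> \<phi> x \<le> bsum \<theta> \<phi> n x" using bsum_mono[OF x, of "Suc 0" n] by simp
    then have \<tau>: "0 \<le> \<tau>" "\<tau> \<le> t" using s t n by (auto simp: \<tau>_def)
    have "bsum \<theta> \<phi> n x \<le> s + \<tau>" "s + \<tau> < bsum \<theta> \<phi> (Suc n) x"
      using s bsum_strict_mono[OF x, of n "Suc n"] by (auto simp: \<tau>_def)
    then have "sf_flow \<theta> \<phi> \<tau> p = ((\<theta> ^^ n) x, s + \<tau> - bsum \<theta> \<phi> n x)"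
      using sf_flow_eq[OF x s(1)] ps by simp
    then have "sf_flow \<theta> \<phi> \<tau> p \<in> vertical_saturation A" using sf_flow_in_space[OF pO \<tau>(1)] inA by simp
    then show False using p \<tau> by (auto simp: survivors_def)
  qed
  then show "p \<in> {p \<in> \<Omega>. \<forall>n. bsum \<theta> \<phi> n (fst p) \<le> snd p + t \<longrightarrow> (\<theta> ^^ n) (fst p) \<notin> fst ` A}"
    using pO ps by auto
next
  fix p assume p: "p \<in> {p \<in> \<Omega>. \<forall>n. bsum \<theta> \<phi> n (fst p) \<le> snd p + t \<longrightarrow> (\<theta> ^^ n) (fst p) \<notin> fst ` A}"
  then obtain x s where ps: "p = (x, s)" and x: "x \<in> space M" and s: "0 \<le> s" "s < \<phi> x"
    by (auto elim: sf_space_cases)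
  have "sf_flow \<theta> \<phi> \<tau> p \<notin> vertical_saturation A" if \<tau>: "0 \<le> \<tau>" "\<tau> \<le> t" for \<tau>
  proof -
    obtain n where n: "bsum \<theta> \<phi> n x \<le> s + \<tau>" "s + \<tau> < bsum \<theta> \<phi> (Suc n) x"
      using bsum_lap_exists[OF x, of "s + \<tau>"] s \<tau> by auto
    then have "(\<theta> ^^ n) x \<notin> fst ` A" using p ps \<tau> by auto
    then show ?thesis using sf_flow_eq[OF x s(1) n] ps by simp
  qed
  then show "p \<in> survivors M \<theta> \<phi> (vertical_saturation A) t" using p by (auto simp: survivors_def)
qed

lemma sets_survivors_vertical_saturation:
  assumes t: "0 \<le> t" and pA: "fst ` A \<in> sets M"
  shows "survivors M \<theta> \<phi> (vertical_saturation A) t \<in> sets N"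
proof -
  have [measurable]: "Measurable.pred N (\<lambda>p. (\<theta> ^^ n) (fst p) \<in> fst ` A)" for n
    by (rule pred_sets2[OF pA]) (rule measurable_compose[OF measurable_fst measurable_compose_n[OF measurable_\<theta>]])
  have "survivors M \<theta> \<phi> (vertical_saturation A) t =
    {p \<in> space N. (0 \<le> snd p \<and> snd p < \<phi> (fst p)) \<and>
      (\<forall>n. bsum \<theta> \<phi> n (fst p) \<le> snd p + t \<longrightarrow> (\<theta> ^^ n) (fst p) \<notin> fst ` A)}"
    unfolding survivors_vertical_saturation[OF t] by (auto simp: sf_space_def space_pair_measure)
  also have "\<dots> \<in> sets N" by measurable
  finally show ?thesis .
qed

text \<open>
  The fibre over \<open>y\<close> is traversed within time \<open>\<phi> y \<le> C\<close>. So if the orbit of a point that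
  survives \<open>A\<close> until \<open>t + 2 C\<close> entered the fibre over some \<open>y \<in> fst ` A\<close> at a time in
  \<open>[C, C + t]\<close>, it would meet \<open>A\<close> itself on that fibre before time \<open>t + 2 C\<close>.
\<close>
lemma survivors_subset_vimage_survivors_vertical_saturation:
  assumes t: "0 \<le> t" and A: "A \<subseteq> \<Omega>" and C: "\<And>x. x \<in> space M \<Longrightarrow> \<phi> x \<le> C" and C0: "0 \<le> C"
  shows "survivors M \<theta> \<phi> A (t + 2 * C) \<subseteq>
    {p \<in> \<Omega>. sf_flow \<theta> \<phi> C p \<in> survivors M \<theta> \<phi> (vertical_saturation A) t}"
proof
  fix p assume p: "p \<in> survivors M \<theta> \<phi> A (t + 2 * C)"
  then have pO: "p \<in> \<Omega>" by (auto simp: survivors_def)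
  obtain x s where ps: "p = (x, s)" and x: "x \<in> space M" and s: "0 \<le> s" "s < \<phi> x"
    using pO by (rule sf_space_cases)
  have "sf_flow \<theta> \<phi> \<tau> (sf_flow \<theta> \<phi> C p) \<notin> vertical_saturation A" if \<tau>: "0 \<le> \<tau>" "\<tau> \<le> t" for \<tau>
  proof
    assume "sf_flow \<theta> \<phi> \<tau> (sf_flow \<theta> \<phi> C p) \<in> vertical_saturation A"
    then have inP: "sf_flow \<theta> \<phi> (C + \<tau>) p \<in> vertical_saturation A"
      using sf_flow_add[OF pO C0 \<tau>(1)] by simp
    obtain n where n: "bsum \<theta> \<phi> n x \<le> s + (C + \<tau>)" "s + (C + \<tau>) < bsum \<theta> \<phi> (Suc n) x"
      using bsum_lap_exists[OF x, of "s + (C + \<tau>)"] s \<tau> C0 by auto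
    obtain s' where s': "((\<theta> ^^ n) x, s') \<in> A"
      using inP sf_flow_eq[OF x s(1) n] ps by force
    then have s'_bounds: "0 \<le> s'" "s' < \<phi> ((\<theta> ^^ n) x)" using A by (auto simp: sf_space_def)
    have "n \<noteq> 0" using n s \<tau> C[OF x] by (cases n) auto
    then have "\<phi> x \<le> bsum \<theta> \<phi> n x" using bsum_mono[OF x, of "Suc 0" n] by simp
    define \<tau>' where "\<tau>' = bsum \<theta> \<phi> n x - s + s'"
    have "bsum \<theta> \<phi> n x \<le> s + \<tau>'" "s + \<tau>' < bsum \<theta> \<phi> (Suc n) x"
      using s'_bounds by (auto simp: \<tau>'_def bsum_Suc)
    from sf_flow_eq[OF x s(1) this] have "sf_flow \<theta> \<phi> \<tau>' p = ((\<theta> ^^ n) x, s')"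
      by (simp add: ps \<tau>'_def)
    moreover have "\<tau>' \<in> {0..t + 2 * C}"
      using \<open>\<phi> x \<le> _\<close> s s'_bounds C[OF funpow_in_space[OF x, of n]] n \<tau> by (auto simp: \<tau>'_def)
    ultimately show False using p s' by (auto simp: survivors_def dest: bspec[of _ _ \<tau>'])
  qed
  then show "p \<in> {p \<in> \<Omega>. sf_flow \<theta> \<phi> C p \<in> survivors M \<theta> \<phi> (vertical_saturation A) t}"
    using pO sf_flow_in_space[OF pO C0] by (auto simp: survivors_def)
qed

lemma emeasure_survivors_vertical_saturation_ge:
  assumes t: "0 \<le> t" and A: "A \<subseteq> \<Omega>" and pA: "fst ` A \<in> sets M"
    and C: "\<And>x. x \<in> space M \<Longrightarrow> \<phi> x \<le> C" and C0: "0 \<le> C"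
  shows "emeasure (sf_measure M \<phi>) (survivors M \<theta> \<phi> A (t + 2 * C)) \<le>
    emeasure (sf_measure M \<phi>) (survivors M \<theta> \<phi> (vertical_saturation A) t)"
proof -
  note S = sets_survivors_vertical_saturation[OF t pA] survivors_subset
  have "emeasure N (survivors M \<theta> \<phi> A (t + 2 * C)) \<le>
      emeasure N {p \<in> \<Omega>. sf_flow \<theta> \<phi> C p \<in> survivors M \<theta> \<phi> (vertical_saturation A) t}"
    using survivors_subset_vimage_survivors_vertical_saturation[OF t A C C0]
      emeasure_sf_flow_vimage[OF C0 S] by (intro emeasure_mono) auto
  also have "\<dots> = emeasure N (survivors M \<theta> \<phi> (vertical_saturation A) t)"
    using emeasure_sf_flow_vimage[OF C0 S] by simp
  finally show ?thesis by (simp add: emeasure_sf_measure survivors_subset)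
qed

end

theorem proposition3p5:
  fixes M :: "'a measure" and \<theta> :: "'a \<Rightarrow> 'a" and \<phi> :: "'a \<Rightarrow> real"
    and A B :: "('a \<times> real) set"
  assumes "prob_space M"
    and "mp_endo M \<theta>"
    and "ceiling_fun M \<phi>"
    and "is_hole M \<theta> \<phi> A"
    and "is_hole M \<theta> \<phi> B"
  shows
    "(A \<subseteq> B \<and> esc_exists M \<theta> \<phi> A \<and> esc_exists M \<theta> \<phi> B
        \<longrightarrow> esc_rate M \<theta> \<phi> A \<le> esc_rate M \<theta> \<phi> B)
     \<and> (\<forall>r\<ge>0. esc_exists M \<theta> \<phi> A \<and> esc_exists M \<theta> \<phi> (sf_preimage M \<theta> \<phi> r A)
        \<longrightarrow> esc_rate M \<theta> \<phi> A = esc_rate M \<theta> \<phi> (sf_preimage M \<theta> \<phi> r A))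
     \<and> (\<forall>r\<ge>0. esc_exists M \<theta> \<phi> A \<and> esc_exists M \<theta> \<phi> (sf_hit_before M \<theta> \<phi> r A)
        \<longrightarrow> esc_rate M \<theta> \<phi> A = esc_rate M \<theta> \<phi> (sf_hit_before M \<theta> \<phi> r A))
     \<and> ((\<exists>C. \<forall>x\<in>space M. \<phi> x \<le> C) \<and> fst ` A \<in> sets M
        \<and> esc_exists M \<theta> \<phi> A
        \<and> esc_exists M \<theta> \<phi> {p \<in> sf_space M \<phi>. fst p \<in> fst ` A}
        \<longrightarrow> esc_rate M \<theta> \<phi> {p \<in> sf_space M \<phi>. fst p \<in> fst ` A} = esc_rate M \<theta> \<phi> A)"
proof -
  obtain c where "0 < c" "\<And>x. x \<in> space M \<Longrightarrow> c \<le> \<phi> x" "\<phi> \<in> borel_measurable M"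
    using assms(3) by (auto simp: ceiling_fun_def)
  moreover have "\<theta> \<in> measurable M M" "distr M M \<theta> = M" using assms(2) by (auto simp: mp_endo_def)
  ultimately interpret special_flow M \<theta> \<phi> c by unfold_locales auto
  note hole = assms(4)
  have "A \<subseteq> \<Omega>" using hole by (auto simp: is_hole_def sets_sf_measure_iff)
  have "esc_rate M \<theta> \<phi> A \<le> esc_rate M \<theta> \<phi> B" if "A \<subseteq> B"
    using emeasure_survivors_antimono[OF hole that] by (intro esc_rate_antimono) auto
  moreover have "esc_rate M \<theta> \<phi> A = esc_rate M \<theta> \<phi> (sf_preimage M \<theta> \<phi> r A)"
    if "0 \<le> r" "esc_exists M \<theta> \<phi> A" for r
    using that emeasure_survivors_sf_preimage[OF hole]
    by (intro esc_rate_eq_delayI[where d = 0, symmetric]) simp_all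
  moreover have "esc_rate M \<theta> \<phi> A = esc_rate M \<theta> \<phi> (sf_hit_before M \<theta> \<phi> r A)"
    if "0 \<le> r" "esc_exists M \<theta> \<phi> A" for r
    using that emeasure_survivors_antimono[OF hole order_refl]
    by (intro esc_rate_eq_delayI[where d = r, symmetric]) (simp_all add: survivors_sf_hit_before)
  moreover have "esc_rate M \<theta> \<phi> (vertical_saturation A) = esc_rate M \<theta> \<phi> A"
    if "\<forall>x\<in>space M. \<phi> x \<le> C" "fst ` A \<in> sets M" "esc_exists M \<theta> \<phi> A" for C
    using that \<open>A \<subseteq> \<Omega>\<close>
    by (intro esc_rate_eq_delayI[where d = "2 * max C 0"] conjI
        emeasure_survivors_vertical_saturation_ge emeasure_survivors_antimono[OF hole]) auto
  ultimately show ?thesis by blast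
qed

end
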